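(* Let $\mathcal{E}=(\mathbf{R},\mathbf{S},\Sigma_{st},\mathbf{F})$ be a constructive relational to RDF data exchange setting in which every st-tgd head is a single atom, let $(T,f,p)$ be a violation sort, and let $I$ be an instance of $\mathcal{R}$ (not necessarily satisfying $\Sigma_{fd}$). (1) The following are equivalent: (a) there exist a sequence $\pi$ such that $(T,f)$ is accessible in $\mathcal{E}$ with $\pi$, two st-tgds $\sigma,\sigma'$ contentious with sort $(T,f,p)$, and a homomorphism $h:I_{\pi,\sigma,\sigma'}\to I$; (b) there exist a tuple $\bar a$ of constants from the active domain of $I$ and constants $b,b'$ such that the core pre-solution for $I$ to $\mathcal{E}$ includes $\{T(f^F(\bar a)),\mathit{Triple}(f^F(\bar a),p,b),\mathit{Triple}(f^F(\bar a),p,b')\}$. (2) Moreover, writing the heads of $\sigma,\sigma'$ as $\mathit{Triple}(f(\bar z),p,t)$ and $\mathit{Triple}(f(\bar z'),p,t')$, the witnesses correspond via $\bar a=(h\circ h_{\pi,\sigma,\sigma'})(\bar z)=(h\circ h_{\pi,\sigma,\sigma'})(\bar z')$, $b=(h\circ h_{\pi,\sigma,\sigma'})(t)$ and $b'=(h\circ h_{\pi,\sigma,\sigma'})(t')$ (terms $g(\bar u)$ being evaluated as $g^F$ applied to the image of $\bar u$).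
   Context: Values: $\mathsf{Iri}$ (IRIs, containing predicates $\mathsf{Pred}$), $\mathsf{NullIri}$, $\mathsf{Lit}$ with null literals $\mathsf{NullLit}\subseteq\mathsf{Lit}$; non-null values are constants. $\mathbf{R}=(\mathcal{R},\Sigma_{fd})$: relation names with arities and functional dependencies; an instance of $\mathcal{R}$ assigns finite sets of tuples of literal values to relation names. Deterministic shape schema $\mathbf{S}=(\mathcal{T},\delta)$, $\delta:\mathcal{T}\times\mathsf{Pred}\rightharpoonup(\mathcal{T}\cup\{\mathit{Literal}\})\times\{1,?,*,+\}$, written $\delta(T,p)=S^\mu$. IRI constructor library $\mathbf{F}=(\mathcal{F},F)$, each $n$-ary $f$ interpreted as $f^F:\mathsf{Lit}^n\to\mathsf{Iri}$ (constants), with pairwise disjoint ranges; st-tgds are full, $\forall\bar x.\,\varphi\Rightarrow\psi$ with $\varphi$ a conjunction of atoms over $\mathcal{R}$ and $\psi$ one atom $\mathit{Triple}(t_1,p,t_2)$, $T(t)$ or $\mathit{Literal}(t)$, terms being variables or $f(\bar u)$ with $\bar u$ variables. Core pre-solution of $I$: least set $J_0$ of facts containing, for every st-tgd and assignment $g$ of its variables making its body true in $I$, its head atom with terms evaluated ($f(\bar u)\mapsto f^F(g(\bar u))$), closed under: $T(a),\mathit{Triple}(a,p,b)\in J_0$, $\delta(T,p)=S^\mu$ imply $S(b)\in J_0$. Accessibility: $(T,f)$ is accessible with $\pi=\sigma_0,\dots,\sigma_n$ if for some types $T_i$, constructors $f_i$, predicates $p_i$, variable tuples $\bar x_i,\bar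 y_i$: head of $\sigma_0$ is $T_0(f_0(\bar y_0))$, head of $\sigma_i$ is $\mathit{Triple}(f_{i-1}(\bar x_i),p_i,f_i(\bar y_i))$ ($1\le i\le n$), $\delta(T_{i-1},p_i)=T_i^{\mu_i}$ ($1\le i\le n$), $T_n=T$, $f_n=f$. A violation sort is $(T,f,p)$ with $T\in\mathcal{T}$, $f\in\mathcal{F}$, $\delta(T,p)=S^\mu$ for some $S$ and $\mu\in\{1,?\}$. Two st-tgds $\sigma,\sigma'$ (possibly two variable-renamed copies of the same st-tgd) are contentious with sort $(T,f,p)$ if the head of $\sigma$ is $\mathit{Triple}(f(\bar z),p,t)$, the head of $\sigma'$ is $\mathit{Triple}(f(\bar z'),p,t')$, $(T,f)$ is accessible in $\mathcal{E}$ and $\delta(T,p)=S^\mu$ with $\mu\in\{1,?\}$. Construction of $I_{\pi,\sigma,\sigma'}$: rename variables so that $\sigma_0,\dots,\sigma_n,\sigma_{n+1}=\sigma,\sigma_{n+2}=\sigma'$ use pairwise disjoint variables; let $B_{\pi,\sigma,\sigma'}$ be the union of their bodies (variables as domain elements); let $h_{\pi,\sigma,\sigma'}$ map the variables of these st-tgds to null literals, identifying (componentwise) $\bar x_i$ with $\bar y_{i-1}$ for $1\le i\le n$, $\bar z$ with $\bar y_n$, and $\bar z'$ with $\bar y_n$, and assigning fresh distinct nulls otherwise; $I_{\pi,\sigma,\sigma'}=h_{\pi,\sigma,\sigma'}(B_{\pi,\sigma,\sigma'})$ (unique up to isomorphism). A homomorphism $h:I_{\pi,\sigma,\sigma'}\to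 I$ maps nulls to values so that every fact of $I_{\pi,\sigma,\sigma'}$ is mapped to a fact of $I$. *)

theory Defs
  imports Main
begin

datatype ('f,'v) iterm = Var 'v | Fn 'f "'v list"

datatype ('t,'p,'f,'v) head =
    HTriple "('f,'v) iterm" 'p "('f,'v) iterm"
  | HType 't "('f,'v) iterm"
  | HLiteral "('f,'v) iterm"

type_synonym ('r,'t,'p,'f,'v) tgd = "('r \<times> 'v list) list \<times> ('t,'p,'f,'v) head"

datatype 't shape = ShType 't | ShLiteral
datatype mult = MOne | MOpt | MStar | MPlus

datatype ('i,'l) val = Iri 'i | Lit 'l

datatype ('t,'p,'i,'l) tfact =
    Triple "('i,'l) val" 'p "('i,'l) val"
  | TypeF 't "('i,'l) val"
  | LiteralF "('i,'l) val"

text \<open>A data exchange setting: relational arities (FDs play no role here since I need not satisfy them),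
 the deterministic shape schema delta (types = all elements of 't, predicates = all elements of 'p),
 the IRI constructor library (arities and interpretation), and the st-tgds.\<close>
record ('r,'t,'p,'f,'i,'l,'v) setting =
  rel_arity :: "'r \<Rightarrow> nat"
  delta :: "'t \<Rightarrow> 'p \<Rightarrow> ('t shape \<times> mult) option"
  cons_arity :: "'f \<Rightarrow> nat"
  cons_int :: "'f \<Rightarrow> 'l list \<Rightarrow> 'i"
  stgds :: "('r,'t,'p,'f,'v) tgd set"

fun is_const :: "'i set \<Rightarrow> 'l set \<Rightarrow> ('i,'l) val \<Rightarrow> bool" where
  "is_const nullI nullL (Iri i) = (i \<notin> nullI)"
| "is_const nullI nullL (Lit l) = (l \<notin> nullL)"

definition adom :: "('r \<times> 'l list) set \<Rightarrow> 'l set" where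
  "adom I = (\<Union>(R,us)\<in>I. set us)"

fun term_vars :: "('f,'v) iterm \<Rightarrow> 'v set" where
  "term_vars (Var x) = {x}"
| "term_vars (Fn f us) = set us"

fun head_vars :: "('t,'p,'f,'v) head \<Rightarrow> 'v set" where
  "head_vars (HTriple s p ob) = term_vars s \<union> term_vars ob"
| "head_vars (HType T t) = term_vars t"
| "head_vars (HLiteral t) = term_vars t"

definition body_vars :: "('r \<times> 'v list) list \<Rightarrow> 'v set" where
  "body_vars B = (\<Union>(R,xs)\<in>set B. set xs)"

definition tgd_vars :: "('r,'t,'p,'f,'v) tgd \<Rightarrow> 'v set" where
  "tgd_vars \<sigma> = body_vars (fst \<sigma>) \<union> head_vars (snd \<sigma>)"

fun wf_term :: "('r,'t,'p,'f,'i,'l,'v) setting \<Rightarrow> ('f,'v) iterm \<Rightarrow> bool" where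
  "wf_term E (Var x) = True"
| "wf_term E (Fn f us) = (length us = cons_arity E f)"

fun wf_head :: "('r,'t,'p,'f,'i,'l,'v) setting \<Rightarrow> ('t,'p,'f,'v) head \<Rightarrow> bool" where
  "wf_head E (HTriple s p ob) = (wf_term E s \<and> wf_term E ob)"
| "wf_head E (HType T t) = wf_term E t"
| "wf_head E (HLiteral t) = wf_term E t"

fun is_fn :: "('f,'v) iterm \<Rightarrow> bool" where
  "is_fn (Fn f us) = True"
| "is_fn (Var x) = False"

definition wf_setting :: "('r,'t,'p,'f,'i,'l,'v) setting \<Rightarrow> 'i set \<Rightarrow> bool" where
  "wf_setting E nullI \<longleftrightarrow>
     (\<forall>\<sigma>\<in>stgds E. (\<forall>(R,xs)\<in>set (fst \<sigma>). length xs = rel_arity E R)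
                 \<and> wf_head E (snd \<sigma>) \<and> head_vars (snd \<sigma>) \<subseteq> body_vars (fst \<sigma>))
   \<and> (\<forall>f xs. length xs = cons_arity E f \<longrightarrow> cons_int E f xs \<notin> nullI)
   \<and> (\<forall>f g xs ys. f \<noteq> g \<longrightarrow> length xs = cons_arity E f \<longrightarrow> length ys = cons_arity E g
          \<longrightarrow> cons_int E f xs \<noteq> cons_int E g ys)"

definition constructive :: "('r,'t,'p,'f,'i,'l,'v) setting \<Rightarrow> bool" where
  "constructive E \<longleftrightarrow>
     (\<forall>f. inj_on (cons_int E f) {xs. length xs = cons_arity E f})
   \<and> (\<forall>\<sigma>\<in>stgds E. case snd \<sigma> of
          HType T t \<Rightarrow> is_fn t
        | HTriple s p ob \<Rightarrow> is_fn s
        | HLiteral t \<Rightarrow> True)"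

definition rel_instance :: "('r,'t,'p,'f,'i,'l,'v) setting \<Rightarrow> ('r \<times> 'l list) set \<Rightarrow> bool" where
  "rel_instance E I \<longleftrightarrow> finite I \<and> (\<forall>(R,us)\<in>I. length us = rel_arity E R)"

fun eval_term :: "('f \<Rightarrow> 'l list \<Rightarrow> 'i) \<Rightarrow> ('v \<Rightarrow> 'l) \<Rightarrow> ('f,'v) iterm \<Rightarrow> ('i,'l) val" where
  "eval_term F g (Var x) = Lit (g x)"
| "eval_term F g (Fn f us) = Iri (F f (map g us))"

fun eval_head :: "('f \<Rightarrow> 'l list \<Rightarrow> 'i) \<Rightarrow> ('v \<Rightarrow> 'l) \<Rightarrow> ('t,'p,'f,'v) head \<Rightarrow> ('t,'p,'i,'l) tfact" where
  "eval_head F g (HTriple s p ob) = Triple (eval_term F g s) p (eval_term F g ob)"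
| "eval_head F g (HType T t) = TypeF T (eval_term F g t)"
| "eval_head F g (HLiteral t) = LiteralF (eval_term F g t)"

fun shape_fact :: "'t shape \<Rightarrow> ('i,'l) val \<Rightarrow> ('t,'p,'i,'l) tfact" where
  "shape_fact (ShType S) b = TypeF S b"
| "shape_fact ShLiteral b = LiteralF b"

definition body_sat :: "('r \<times> 'l list) set \<Rightarrow> ('v \<Rightarrow> 'l) \<Rightarrow> ('r \<times> 'v list) list \<Rightarrow> bool" where
  "body_sat I g B \<longleftrightarrow> (\<forall>(R,xs)\<in>set B. (R, map g xs) \<in> I)"

inductive_set core_pre :: "('r,'t,'p,'f,'i,'l,'v) setting \<Rightarrow> ('r \<times> 'l list) set \<Rightarrow> ('t,'p,'i,'l) tfact set"
  for E :: "('r,'t,'p,'f,'i,'l,'v) setting" and I :: "('r \<times> 'l list) set" where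
  base: "\<sigma> \<in> stgds E \<Longrightarrow> body_sat I g (fst \<sigma>) \<Longrightarrow> eval_head (cons_int E) g (snd \<sigma>) \<in> core_pre E I"
| close: "TypeF T a \<in> core_pre E I \<Longrightarrow> Triple a p b \<in> core_pre E I \<Longrightarrow> delta E T p = Some (S, \<mu>)
          \<Longrightarrow> shape_fact S b \<in> core_pre E I"

definition accessible_with :: "('r,'t,'p,'f,'i,'l,'v) setting \<Rightarrow> ('r,'t,'p,'f,'v) tgd list \<Rightarrow> 't \<Rightarrow> 'f \<Rightarrow> bool" where
  "accessible_with E \<pi> T f \<longleftrightarrow> \<pi> \<noteq> [] \<and> set \<pi> \<subseteq> stgds E \<and>
     (\<exists>Ts fs ps. length Ts = length \<pi> \<and> length fs = length \<pi> \<and> length ps = length \<pi>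
        \<and> (\<exists>ys. snd (\<pi>!0) = HType (Ts!0) (Fn (fs!0) ys))
        \<and> (\<forall>i. 1 \<le> i \<and> i < length \<pi> \<longrightarrow>
              (\<exists>xs ys. snd (\<pi>!i) = HTriple (Fn (fs!(i-1)) xs) (ps!i) (Fn (fs!i) ys))
            \<and> (\<exists>\<mu>. delta E (Ts!(i-1)) (ps!i) = Some (ShType (Ts!i), \<mu>)))
        \<and> last Ts = T \<and> last fs = f)"

definition accessible :: "('r,'t,'p,'f,'i,'l,'v) setting \<Rightarrow> 't \<Rightarrow> 'f \<Rightarrow> bool" where
  "accessible E T f \<longleftrightarrow> (\<exists>\<pi>. accessible_with E \<pi> T f)"

text \<open>(T,f,p) is a violation sort (T and f range over all types/constructors).\<close>
definition violation_sort :: "('r,'t,'p,'f,'i,'l,'v) setting \<Rightarrow> 't \<Rightarrow> 'p \<Rightarrow> bool" where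
  "violation_sort E T p \<longleftrightarrow> (\<exists>S \<mu>. delta E T p = Some (S, \<mu>) \<and> \<mu> \<in> {MOne, MOpt})"

definition contentious :: "('r,'t,'p,'f,'i,'l,'v) setting \<Rightarrow> ('r,'t,'p,'f,'v) tgd \<Rightarrow> ('r,'t,'p,'f,'v) tgd
     \<Rightarrow> 't \<Rightarrow> 'f \<Rightarrow> 'p \<Rightarrow> bool" where
  "contentious E \<sigma> \<sigma>' T f p \<longleftrightarrow> \<sigma> \<in> stgds E \<and> \<sigma>' \<in> stgds E
     \<and> (\<exists>z t z' t'. snd \<sigma> = HTriple (Fn f z) p t \<and> snd \<sigma>' = HTriple (Fn f z') p t')
     \<and> accessible E T f \<and> violation_sort E T p"

fun subj_args :: "('t,'p,'f,'v) head \<Rightarrow> 'v list" where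
  "subj_args (HTriple (Fn f xs) p ob) = xs"
| "subj_args _ = []"

fun obj_args :: "('t,'p,'f,'v) head \<Rightarrow> 'v list" where
  "obj_args (HTriple s p (Fn f ys)) = ys"
| "obj_args (HType T (Fn f ys)) = ys"
| "obj_args _ = []"

fun obj_term :: "('t,'p,'f,'v) head \<Rightarrow> ('f,'v) iterm" where
  "obj_term (HTriple s p ob) = ob"
| "obj_term (HType T t) = t"
| "obj_term (HLiteral t) = t"

text \<open>The sequence sigma_0..sigma_n, sigma_{n+1} = sigma, sigma_{n+2} = sigma'. Renaming apart is
 realized by tagging each variable with the position k of its st-tgd: (k, x).\<close>
definition tgd_seq :: "('r,'t,'p,'f,'v) tgd list \<Rightarrow> ('r,'t,'p,'f,'v) tgd \<Rightarrow> ('r,'t,'p,'f,'v) tgd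
     \<Rightarrow> ('r,'t,'p,'f,'v) tgd list" where
  "tgd_seq \<pi> \<sigma> \<sigma>' = \<pi> @ [\<sigma>, \<sigma>']"

text \<open>Index of the st-tgd whose object tuple is identified with the subject tuple at position i:
 i-1 for 1 <= i <= n, and n for i = n+1, n+2.\<close>
definition prev_idx :: "('r,'t,'p,'f,'v) tgd list \<Rightarrow> nat \<Rightarrow> nat" where
  "prev_idx \<pi> i = (if i < length \<pi> then i - 1 else length \<pi> - 1)"

definition ident :: "('r,'t,'p,'f,'v) tgd list \<Rightarrow> ('r,'t,'p,'f,'v) tgd \<Rightarrow> ('r,'t,'p,'f,'v) tgd
     \<Rightarrow> ((nat \<times> 'v) \<times> (nat \<times> 'v)) set" where
  "ident \<pi> \<sigma> \<sigma>' = {((i, x), (prev_idx \<pi> i, y)) | i x y.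
      1 \<le> i \<and> i < length (tgd_seq \<pi> \<sigma> \<sigma>') \<and>
      (x, y) \<in> set (zip (subj_args (snd (tgd_seq \<pi> \<sigma> \<sigma>' ! i)))
                         (obj_args (snd (tgd_seq \<pi> \<sigma> \<sigma>' ! prev_idx \<pi> i))))}"

definition tagged_vars :: "('r,'t,'p,'f,'v) tgd list \<Rightarrow> ('r,'t,'p,'f,'v) tgd \<Rightarrow> ('r,'t,'p,'f,'v) tgd
     \<Rightarrow> (nat \<times> 'v) set" where
  "tagged_vars \<pi> \<sigma> \<sigma>' = {(k, v) | k v. k < length (tgd_seq \<pi> \<sigma> \<sigma>') \<and> v \<in> tgd_vars (tgd_seq \<pi> \<sigma> \<sigma>' ! k)}"

definition tagged_body :: "('r,'t,'p,'f,'v) tgd list \<Rightarrow> ('r,'t,'p,'f,'v) tgd \<Rightarrow> ('r,'t,'p,'f,'v) tgd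
     \<Rightarrow> ('r \<times> (nat \<times> 'v) list) set" where
  "tagged_body \<pi> \<sigma> \<sigma>' = {(R, map (Pair k) xs) | k R xs.
      k < length (tgd_seq \<pi> \<sigma> \<sigma>') \<and> (R, xs) \<in> set (fst (tgd_seq \<pi> \<sigma> \<sigma>' ! k))}"

text \<open>hp is a valid choice of h_{pi,sigma,sigma'}: it maps the variables to null literals,
 identifying exactly the variables related by the (equivalence closure of the) required
 identifications, and assigning distinct nulls otherwise.\<close>
definition is_h_pi :: "'l set \<Rightarrow> ('r,'t,'p,'f,'v) tgd list \<Rightarrow> ('r,'t,'p,'f,'v) tgd \<Rightarrow> ('r,'t,'p,'f,'v) tgd
     \<Rightarrow> (nat \<times> 'v \<Rightarrow> 'l) \<Rightarrow> bool" where
  "is_h_pi nullL \<pi> \<sigma> \<sigma>' hp \<longleftrightarrow>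
     (\<forall>u\<in>tagged_vars \<pi> \<sigma> \<sigma>'. hp u \<in> nullL) \<and>
     (\<forall>u\<in>tagged_vars \<pi> \<sigma> \<sigma>'. \<forall>w\<in>tagged_vars \<pi> \<sigma> \<sigma>'.
         hp u = hp w \<longleftrightarrow> (u, w) \<in> (ident \<pi> \<sigma> \<sigma>' \<union> (ident \<pi> \<sigma> \<sigma>')\<inverse>)\<^sup>*)"

definition I_pi :: "('r,'t,'p,'f,'v) tgd list \<Rightarrow> ('r,'t,'p,'f,'v) tgd \<Rightarrow> ('r,'t,'p,'f,'v) tgd
     \<Rightarrow> (nat \<times> 'v \<Rightarrow> 'l) \<Rightarrow> ('r \<times> 'l list) set" where
  "I_pi \<pi> \<sigma> \<sigma>' hp = (\<lambda>(R, us). (R, map hp us)) ` tagged_body \<pi> \<sigma> \<sigma>'"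

definition is_hom :: "'l set \<Rightarrow> ('l \<Rightarrow> 'l) \<Rightarrow> ('r \<times> 'l list) set \<Rightarrow> ('r \<times> 'l list) set \<Rightarrow> bool" where
  "is_hom nullL h J I \<longleftrightarrow> (\<forall>a. a \<notin> nullL \<longrightarrow> h a = a) \<and> (\<forall>(R, us)\<in>J. (R, map h us) \<in> I)"

definition cond_a :: "('r,'t,'p,'f,'i,'l,'v) setting \<Rightarrow> 'l set \<Rightarrow> ('r \<times> 'l list) set \<Rightarrow> 't \<Rightarrow> 'f \<Rightarrow> 'p
     \<Rightarrow> ('r,'t,'p,'f,'v) tgd list \<Rightarrow> ('r,'t,'p,'f,'v) tgd \<Rightarrow> ('r,'t,'p,'f,'v) tgd
     \<Rightarrow> (nat \<times> 'v \<Rightarrow> 'l) \<Rightarrow> ('l \<Rightarrow> 'l) \<Rightarrow> bool" where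
  "cond_a E nullL I T f p \<pi> \<sigma> \<sigma>' hp h \<longleftrightarrow>
     accessible_with E \<pi> T f \<and> contentious E \<sigma> \<sigma>' T f p \<and>
     is_h_pi nullL \<pi> \<sigma> \<sigma>' hp \<and> is_hom nullL h (I_pi \<pi> \<sigma> \<sigma>' hp) I"

definition cond_b :: "('r,'t,'p,'f,'i,'l,'v) setting \<Rightarrow> 'i set \<Rightarrow> 'l set \<Rightarrow> ('r \<times> 'l list) set
     \<Rightarrow> 't \<Rightarrow> 'f \<Rightarrow> 'p \<Rightarrow> 'l list \<Rightarrow> ('i,'l) val \<Rightarrow> ('i,'l) val \<Rightarrow> bool" where
  "cond_b E nullI nullL I T f p a b b' \<longleftrightarrow>
     length a = cons_arity E f \<and> set a \<subseteq> adom I \<and> (\<forall>x\<in>set a. x \<notin> nullL) \<and>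
     is_const nullI nullL b \<and> is_const nullI nullL b' \<and>
     {TypeF T (Iri (cons_int E f a)), Triple (Iri (cons_int E f a)) p b,
      Triple (Iri (cons_int E f a)) p b'} \<subseteq> core_pre E I"

definition copy_assign :: "('l \<Rightarrow> 'l) \<Rightarrow> (nat \<times> 'v \<Rightarrow> 'l) \<Rightarrow> nat \<Rightarrow> 'v \<Rightarrow> 'l" where
  "copy_assign h hp k = (\<lambda>v. h (hp (k, v)))"

end

theory Submission
  imports Defs
begin

(* A type fact T(f(a)) of the core pre-solution is derived along an accessibility path: a type
   atom fired by sigma_0, followed by triples fired by sigma_1, ..., sigma_n, each with subject
   tuple equal to the object tuple of its predecessor. Since constructors are injective with
   disjoint ranges, the path and the matches of the bodies can be read back from the fact itself.
   Hence the facts of (b) exist iff there are matches in I of the bodies of sigma_0, ..., sigma_n,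
   sigma, sigma' that agree on the identified tuples. Such a compatible family of matches is the
   same as a homomorphism from I_{pi,sigma,sigma'} to I: one direction composes h with
   h_{pi,sigma,sigma'}; conversely, h_{pi,sigma,sigma'} gives one null per class of identified
   variables, and h sends it to the common value of the class. *)

definition zip_agree :: "('a \<Rightarrow> 'c) \<Rightarrow> 'a list \<Rightarrow> ('b \<Rightarrow> 'c) \<Rightarrow> 'b list \<Rightarrow> bool" where
  "zip_agree g xs g' ys \<longleftrightarrow> (\<forall>(x, y)\<in>set (zip xs ys). g x = g' y)"

lemma map_eq_map_iff_zip_agree:
  "map g xs = map g' ys \<longleftrightarrow> length xs = length ys \<and> zip_agree g xs g' ys"
  by (simp add: zip_agree_def list_eq_iff_zip_eq zip_map1 zip_map2 split_def)

lemma subj_args_subset_head_vars: "set (subj_args h) \<subseteq> head_vars h"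
  by (induction h rule: subj_args.induct) auto

lemma obj_args_subset_head_vars: "set (obj_args h) \<subseteq> head_vars h"
  by (induction h rule: obj_args.induct) auto

lemma term_vars_obj_term_subset: "term_vars (obj_term h) \<subseteq> head_vars h"
  by (cases h) auto

lemma eval_term_cong:
  "(\<And>x. x \<in> term_vars t \<Longrightarrow> g x = g' x) \<Longrightarrow> eval_term F g t = eval_term F g' t"
  by (cases t) (auto cong: map_cong)

lemma finite_tgd_vars: "finite (tgd_vars \<sigma>)"
proof -
  have "finite (term_vars t)" for t :: "('f, 'v) iterm"
    by (cases t) auto
  then have "finite (head_vars h)" for h :: "('t, 'p, 'f, 'v) head"
    by (cases h) auto
  then show ?thesis
    by (auto simp: tgd_vars_def body_vars_def)
qed

lemma body_sat_adom: "body_sat I g B \<Longrightarrow> x \<in> body_vars B \<Longrightarrow> g x \<in> adom I"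
  unfolding body_sat_def body_vars_def adom_def by fastforce

lemma wf_setting_stgd:
  assumes "wf_setting E nullI" "\<sigma> \<in> stgds E"
  shows "wf_head E (snd \<sigma>)" "head_vars (snd \<sigma>) \<subseteq> body_vars (fst \<sigma>)"
  using assms unfolding wf_setting_def by auto

lemma cons_int_eq_iff:
  assumes "wf_setting E nullI" "constructive E"
    and "length xs = cons_arity E f" "length ys = cons_arity E g"
  shows "cons_int E f xs = cons_int E g ys \<longleftrightarrow> f = g \<and> xs = ys"
  using assms unfolding wf_setting_def constructive_def inj_on_def by (cases "f = g") auto

lemma eval_term_eq_cons_int:
  assumes "wf_setting E nullI" "constructive E" "wf_term E t" "length a = cons_arity E f"
    and "eval_term (cons_int E) g t = Iri (cons_int E f a)"
  obtains z where "t = Fn f z" "map g z = a"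
proof (cases t)
  case (Fn f' z)
  then show ?thesis
    using assms that cons_int_eq_iff[OF assms(1,2), of "map g z" f' a f] by auto
qed (use assms(5) in simp)

lemma core_pre_TripleE:
  assumes "Triple x q y \<in> core_pre E I"
  obtains \<sigma> g s t where "\<sigma> \<in> stgds E" "body_sat I g (fst \<sigma>)" "snd \<sigma> = HTriple s q t"
    "eval_term (cons_int E) g s = x" "eval_term (cons_int E) g t = y"
  using assms
proof (cases rule: core_pre.cases)
  case (base \<sigma> g)
  then show ?thesis
    using that by (cases "snd \<sigma>") auto
next
  case (close T a p b S \<mu>)
  then show ?thesis
    by (cases S) auto
qed

lemma core_pre_Triple_cons_intE:
  assumes wf: "wf_setting E nullI" and con: "constructive E"
    and "Triple (Iri (cons_int E f a)) q y \<in> core_pre E I" "length a = cons_arity E f"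
  obtains \<sigma> g z t where "\<sigma> \<in> stgds E" "body_sat I g (fst \<sigma>)" "snd \<sigma> = HTriple (Fn f z) q t"
    "map g z = a" "eval_term (cons_int E) g t = y"
proof -
  obtain \<sigma> g s t where \<sigma>: "\<sigma> \<in> stgds E" "body_sat I g (fst \<sigma>)" "snd \<sigma> = HTriple s q t"
    and s: "eval_term (cons_int E) g s = Iri (cons_int E f a)"
    and t: "eval_term (cons_int E) g t = y"
    using core_pre_TripleE[OF assms(3)] .
  have "wf_term E s"
    using wf_setting_stgd(1)[OF wf \<sigma>(1)] \<sigma>(3) by simp
  with s obtain z where "s = Fn f z" "map g z = a"
    using eval_term_eq_cons_int[OF wf con _ assms(4)] by blast
  then show ?thesis
    using that \<sigma> t by blast
qed

lemma accessible_with_singleton: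
  fixes E :: "('r, 't, 'p, 'f, 'i, 'l, 'v) setting"
  shows "accessible_with E [\<sigma>] T f \<longleftrightarrow> \<sigma> \<in> stgds E \<and> (\<exists>ys. snd \<sigma> = HType T (Fn f ys))"
proof
  assume "accessible_with E [\<sigma>] T f"
  then obtain Ts :: "'t list" and fs :: "'f list"
    where "length Ts = 1" "length fs = 1" "last Ts = T" "last fs = f"
      "\<sigma> \<in> stgds E" "\<exists>ys. snd \<sigma> = HType (Ts ! 0) (Fn (fs ! 0) ys)"
    unfolding accessible_with_def by auto
  then show "\<sigma> \<in> stgds E \<and> (\<exists>ys. snd \<sigma> = HType T (Fn f ys))"
    by (auto simp: length_Suc_conv)
next
  assume "\<sigma> \<in> stgds E \<and> (\<exists>ys. snd \<sigma> = HType T (Fn f ys))"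
  then show "accessible_with E [\<sigma>] T f"
    unfolding accessible_with_def
    by (intro conjI exI[of _ "[T]"] exI[of _ "[f]"] exI[of _ "[undefined :: 'p]"]) auto
qed

lemma accessible_with_snocI:
  fixes E :: "('r, 't, 'p, 'f, 'i, 'l, 'v) setting"
  assumes acc: "accessible_with E \<pi> T f" and \<tau>: "\<tau> \<in> stgds E"
    "snd \<tau> = HTriple (Fn f xs) q (Fn f' ys)" "delta E T q = Some (ShType T', \<mu>)"
  shows "accessible_with E (\<pi> @ [\<tau>]) T' f'"
proof -
  define n where "n = length \<pi>"
  obtain Ts fs ps where st: "\<pi> \<noteq> []" "set \<pi> \<subseteq> stgds E"
    and len: "length Ts = n" "length fs = n" "length ps = n"
    and first: "\<exists>ys. snd (\<pi> ! 0) = HType (Ts ! 0) (Fn (fs ! 0) ys)"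
    and step: "\<And>i. 1 \<le> i \<Longrightarrow> i < n \<Longrightarrow>
        (\<exists>xs ys. snd (\<pi> ! i) = HTriple (Fn (fs ! (i - 1)) xs) (ps ! i) (Fn (fs ! i) ys))
        \<and> (\<exists>\<mu>. delta E (Ts ! (i - 1)) (ps ! i) = Some (ShType (Ts ! i), \<mu>))"
    and last: "last Ts = T" "last fs = f"
    using acc unfolding accessible_with_def n_def by blast
  have n: "0 < n" "Ts \<noteq> []" "fs \<noteq> []"
    using st(1) len by (auto simp: n_def)
  then have last': "Ts ! (n - 1) = T" "fs ! (n - 1) = f"
    using last len by (simp_all add: last_conv_nth)
  show ?thesis
    unfolding accessible_with_def
  proof (intro conjI exI[of _ "Ts @ [T']"] exI[of _ "fs @ [f']"] exI[of _ "ps @ [q]"] allI impI)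
    show "\<exists>ys. snd ((\<pi> @ [\<tau>]) ! 0) = HType ((Ts @ [T']) ! 0) (Fn ((fs @ [f']) ! 0) ys)"
      using first st(1) len n(1) by (simp add: nth_append)
    fix i assume i: "1 \<le> i \<and> i < length (\<pi> @ [\<tau>])"
    then consider "i < n" | "i = n"
      by (fastforce simp: n_def)
    then show "\<exists>xs ys. snd ((\<pi> @ [\<tau>]) ! i)
        = HTriple (Fn ((fs @ [f']) ! (i - 1)) xs) ((ps @ [q]) ! i) (Fn ((fs @ [f']) ! i) ys)"
      and "\<exists>\<mu>. delta E ((Ts @ [T']) ! (i - 1)) ((ps @ [q]) ! i) = Some (ShType ((Ts @ [T']) ! i), \<mu>)"
      by (cases; use i step n len last' \<tau> in \<open>auto simp: nth_append n_def\<close>)+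
  qed (use st \<tau> len n_def in auto)
qed

lemma accessible_with_snocE:
  fixes E :: "('r, 't, 'p, 'f, 'i, 'l, 'v) setting"
  assumes acc: "accessible_with E (\<pi> @ [\<tau>]) T' f'" and "\<pi> \<noteq> []"
  obtains T f xs q ys \<mu> where "accessible_with E \<pi> T f" "\<tau> \<in> stgds E"
    "snd \<tau> = HTriple (Fn f xs) q (Fn f' ys)" "delta E T q = Some (ShType T', \<mu>)"
proof -
  define n where "n = length \<pi>"
  have n: "0 < n" "(\<pi> @ [\<tau>]) ! n = \<tau>" "\<And>i. i < n \<Longrightarrow> (\<pi> @ [\<tau>]) ! i = \<pi> ! i"
    using assms(2) by (simp_all add: n_def nth_append)
  obtain Ts fs ps where len: "length Ts = Suc n" "length fs = Suc n" "length ps = Suc n"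
    and first: "\<exists>ys. snd ((\<pi> @ [\<tau>]) ! 0) = HType (Ts ! 0) (Fn (fs ! 0) ys)"
    and step: "\<And>i. 1 \<le> i \<Longrightarrow> i < Suc n \<Longrightarrow>
        (\<exists>xs ys. snd ((\<pi> @ [\<tau>]) ! i) = HTriple (Fn (fs ! (i - 1)) xs) (ps ! i) (Fn (fs ! i) ys))
        \<and> (\<exists>\<mu>. delta E (Ts ! (i - 1)) (ps ! i) = Some (ShType (Ts ! i), \<mu>))"
    and last: "last Ts = T'" "last fs = f'"
    and st: "set \<pi> \<subseteq> stgds E" "\<tau> \<in> stgds E"
    using acc unfolding accessible_with_def n_def by auto
  obtain Ts0 fs0 ps0 q where Ts: "Ts = Ts0 @ [T']" "length Ts0 = n"
    and fs: "fs = fs0 @ [f']" "length fs0 = n" and ps: "ps = ps0 @ [q]" "length ps0 = n"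
    using len last by (auto simp: length_Suc_conv_rev)
  have ne: "Ts0 \<noteq> []" "fs0 \<noteq> []"
    using Ts(2) fs(2) n(1) by auto
  have "accessible_with E \<pi> (last Ts0) (last fs0)"
    unfolding accessible_with_def
  proof (intro conjI exI[of _ Ts0] exI[of _ fs0] exI[of _ ps0] allI impI)
    show "\<exists>ys. snd (\<pi> ! 0) = HType (Ts0 ! 0) (Fn (fs0 ! 0) ys)"
      using first assms(2) Ts fs n(1) by (simp add: nth_append)
    fix i assume "1 \<le> i \<and> i < length \<pi>"
    moreover have "i - 1 < n" "i < n"
      using calculation by (auto simp: n_def)
    ultimately show "\<exists>xs ys. snd (\<pi> ! i) = HTriple (Fn (fs0 ! (i - 1)) xs) (ps0 ! i) (Fn (fs0 ! i) ys)"
      and "\<exists>\<mu>. delta E (Ts0 ! (i - 1)) (ps0 ! i) = Some (ShType (Ts0 ! i), \<mu>)"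
      using step[of i] n Ts fs ps by (auto simp: nth_append)
  qed (use assms(2) st Ts fs ps n_def in auto)
  moreover have "\<exists>xs ys. snd \<tau> = HTriple (Fn (last fs0) xs) q (Fn f' ys)"
    and "\<exists>\<mu>. delta E (last Ts0) q = Some (ShType T', \<mu>)"
    using step[of n] n Ts fs ps ne by (auto simp: nth_append last_conv_nth)
  ultimately show thesis
    using that st(2) by blast
qed

inductive type_chain ::
  "('r, 't, 'p, 'f, 'i, 'l, 'v) setting \<Rightarrow> ('r \<times> 'l list) set \<Rightarrow> (nat \<Rightarrow> 'v \<Rightarrow> 'l)
    \<Rightarrow> ('r, 't, 'p, 'f, 'v) tgd list \<Rightarrow> 't \<Rightarrow> 'f \<Rightarrow> 'l list \<Rightarrow> bool"
  for E I G where
  start: "\<sigma> \<in> stgds E \<Longrightarrow> snd \<sigma> = HType T (Fn f ys) \<Longrightarrow> body_sat I (G 0) (fst \<sigma>)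
    \<Longrightarrow> type_chain E I G [\<sigma>] T f (map (G 0) ys)"
| snoc: "type_chain E I G \<pi> T f a \<Longrightarrow> \<tau> \<in> stgds E \<Longrightarrow> snd \<tau> = HTriple (Fn f xs) q (Fn f' ys)
    \<Longrightarrow> delta E T q = Some (ShType T', \<mu>) \<Longrightarrow> body_sat I (G (length \<pi>)) (fst \<tau>)
    \<Longrightarrow> map (G (length \<pi>)) xs = a
    \<Longrightarrow> type_chain E I G (\<pi> @ [\<tau>]) T' f' (map (G (length \<pi>)) ys)"

lemma type_chain_core_pre:
  "type_chain E I G \<pi> T f a \<Longrightarrow> TypeF T (Iri (cons_int E f a)) \<in> core_pre E I"
proof (induction rule: type_chain.induct)
  case (start \<sigma> T f ys)
  then show ?case
    using core_pre.base[of \<sigma> E I "G 0"] by simp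
next
  case (snoc \<pi> T f a \<tau> xs q f' ys T' \<mu>)
  then have "Triple (Iri (cons_int E f a)) q (Iri (cons_int E f' (map (G (length \<pi>)) ys)))
      \<in> core_pre E I"
    using core_pre.base[of \<tau> E I "G (length \<pi>)"] by auto
  from core_pre.close[OF snoc.IH this snoc.hyps(4)] show ?case
    by simp
qed

lemma type_chain_cong:
  "type_chain E I G \<pi> T f a \<Longrightarrow> (\<And>k. k < length \<pi> \<Longrightarrow> G' k = G k) \<Longrightarrow> type_chain E I G' \<pi> T f a"
proof (induction rule: type_chain.induct)
  case (start \<sigma> T f ys)
  then show ?case
    using type_chain.start[of \<sigma> E T f ys I G'] by simp
next
  case (snoc \<pi> T f a \<tau> xs q f' ys T' \<mu>)
  then show ?case
    using type_chain.snoc[of E I G' \<pi> T f a \<tau> xs q f' ys T' \<mu>] by simp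
qed

lemma type_chain_nonempty: "type_chain E I G \<pi> T f a \<Longrightarrow> \<pi> \<noteq> []"
  by (cases rule: type_chain.cases) auto

lemma type_chain_arity:
  assumes "wf_setting E nullI"
  shows "type_chain E I G \<pi> T f a \<Longrightarrow> length a = cons_arity E f"
  by (induction rule: type_chain.induct) (use wf_setting_stgd(1)[OF assms] in fastforce)+

lemma type_chain_accessible_with: "type_chain E I G \<pi> T f a \<Longrightarrow> accessible_with E \<pi> T f"
proof (induction rule: type_chain.induct)
  case (start \<sigma> T f ys)
  then show ?case
    by (auto simp: accessible_with_singleton)
next
  case (snoc \<pi> T f a \<tau> xs q f' ys T' \<mu>)
  then show ?case
    by (intro accessible_with_snocI)
qed

lemma type_chain_body_sat:
  "type_chain E I G \<pi> T f a \<Longrightarrow> k < length \<pi> \<Longrightarrow> body_sat I (G k) (fst (\<pi> ! k))"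
  by (induction arbitrary: k rule: type_chain.induct) (auto simp: nth_append less_Suc_eq)

lemma type_chain_last_obj_args:
  "type_chain E I G \<pi> T f a \<Longrightarrow> map (G (length \<pi> - 1)) (obj_args (snd (last \<pi>))) = a"
  by (induction rule: type_chain.induct) auto

lemma type_chain_link:
  "type_chain E I G \<pi> T f a \<Longrightarrow> 0 < i \<Longrightarrow> i < length \<pi> \<Longrightarrow>
    map (G i) (subj_args (snd (\<pi> ! i))) = map (G (i - 1)) (obj_args (snd (\<pi> ! (i - 1))))"
proof (induction arbitrary: i rule: type_chain.induct)
  case (start \<sigma> T f ys)
  then show ?case by simp
next
  case (snoc \<pi> T f a \<tau> xs q f' ys T' \<mu>)
  show ?case
  proof (cases "i < length \<pi>")
    case True
    then show ?thesis
      using snoc.IH[of i] snoc.prems by (simp add: nth_append less_imp_diff_less)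
  next
    case False
    then have "i = length \<pi>"
      using snoc.prems by simp
    moreover have "\<pi> ! (length \<pi> - 1) = last \<pi>" "length \<pi> - 1 < length \<pi>"
      using type_chain_nonempty[OF snoc.hyps(1)] by (simp_all add: last_conv_nth)
    ultimately show ?thesis
      using snoc.hyps type_chain_last_obj_args[OF snoc.hyps(1)] by (simp add: nth_append)
  qed
qed

lemma core_pre_type_chain:
  assumes wf: "wf_setting E nullI" and con: "constructive E"
  shows "F \<in> core_pre E I \<Longrightarrow> F = TypeF T (Iri (cons_int E f a)) \<Longrightarrow> length a = cons_arity E f
    \<Longrightarrow> \<exists>\<pi> G. type_chain E I G \<pi> T f a"
proof (induction arbitrary: T f a rule: core_pre.induct)
  case (base \<sigma> g)
  then obtain t where \<sigma>: "snd \<sigma> = HType T t" "eval_term (cons_int E) g t = Iri (cons_int E f a)"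
    by (cases "snd \<sigma>") auto
  moreover have "wf_term E t"
    using wf_setting_stgd(1)[OF wf base.hyps(1)] \<sigma>(1) by simp
  ultimately obtain z where "snd \<sigma> = HType T (Fn f z)" "map g z = a"
    using eval_term_eq_cons_int[OF wf con _ base.prems(2)] by metis
  then have "type_chain E I (\<lambda>_. g) [\<sigma>] T f a"
    using type_chain.start[of \<sigma> E T f z I "\<lambda>_. g"] base.hyps by simp
  then show ?case by blast
next
  case (close T0 c q b S \<mu>)
  have S: "S = ShType T" and b: "b = Iri (cons_int E f a)"
    using close.prems(1) by (cases S; simp)+
  obtain \<tau> g s t where \<tau>: "\<tau> \<in> stgds E" "body_sat I g (fst \<tau>)" "snd \<tau> = HTriple s q t"
    and s: "eval_term (cons_int E) g s = c" and t: "eval_term (cons_int E) g t = b"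
    using core_pre_TripleE[OF close.hyps(2)] .
  have "wf_term E s" "wf_term E t"
    using wf_setting_stgd(1)[OF wf \<tau>(1)] \<tau>(3) by simp_all
  obtain ys where ys: "t = Fn f ys" "map g ys = a"
    using eval_term_eq_cons_int[OF wf con \<open>wf_term E t\<close> close.prems(2)] t b by metis
  obtain f0 xs where xs: "s = Fn f0 xs" "length xs = cons_arity E f0"
    using con \<tau>(1,3) \<open>wf_term E s\<close> unfolding constructive_def by (cases s) fastforce+
  obtain \<pi> G where \<pi>: "type_chain E I G \<pi> T0 f0 (map g xs)"
    using close.IH(1)[of T0 f0 "map g xs"] s xs by auto
  then have "type_chain E I (G(length \<pi> := g)) \<pi> T0 f0 (map g xs)"
    by (rule type_chain_cong) simp
  from type_chain.snoc[OF this \<tau>(1)] have "type_chain E I (G(length \<pi> := g)) (\<pi> @ [\<tau>]) T f a"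
    using \<tau> xs ys close.hyps(3) S by simp
  then show ?case by blast
qed

lemma type_chain_if_accessible_with:
  assumes wf: "wf_setting E nullI"
  shows "accessible_with E \<pi> T f \<Longrightarrow> (\<And>k. k < length \<pi> \<Longrightarrow> body_sat I (G k) (fst (\<pi> ! k)))
    \<Longrightarrow> (\<And>i. 0 < i \<Longrightarrow> i < length \<pi> \<Longrightarrow>
          zip_agree (G i) (subj_args (snd (\<pi> ! i))) (G (i - 1)) (obj_args (snd (\<pi> ! (i - 1)))))
    \<Longrightarrow> type_chain E I G \<pi> T f (map (G (length \<pi> - 1)) (obj_args (snd (last \<pi>))))"
proof (induction \<pi> arbitrary: T f rule: rev_induct)
  case Nil
  then show ?case
    by (simp add: accessible_with_def)
next
  case (snoc \<tau> \<pi>)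
  show ?case
  proof (cases "\<pi> = []")
    case True
    then obtain ys where "\<tau> \<in> stgds E" "snd \<tau> = HType T (Fn f ys)"
      using snoc.prems(1) by (auto simp: accessible_with_singleton)
    then show ?thesis
      using type_chain.start[of \<tau> E T f ys I G] snoc.prems(2)[of 0] True by simp
  next
    case False
    then obtain T0 f0 xs q ys \<mu> where acc: "accessible_with E \<pi> T0 f0"
      and \<tau>: "\<tau> \<in> stgds E" "snd \<tau> = HTriple (Fn f0 xs) q (Fn f ys)"
        "delta E T0 q = Some (ShType T, \<mu>)"
      using accessible_with_snocE[OF snoc.prems(1)] by blast
    define a where "a = map (G (length \<pi> - 1)) (obj_args (snd (last \<pi>)))"
    have chain: "type_chain E I G \<pi> T0 f0 a"
      unfolding a_def
    proof (rule snoc.IH[OF acc])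
      show "body_sat I (G k) (fst (\<pi> ! k))" if "k < length \<pi>" for k
        using snoc.prems(2)[of k] that by (simp add: nth_append)
      show "zip_agree (G i) (subj_args (snd (\<pi> ! i))) (G (i - 1)) (obj_args (snd (\<pi> ! (i - 1))))"
        if "0 < i" "i < length \<pi>" for i
        using snoc.prems(3)[of i] that by (simp add: nth_append less_imp_diff_less)
    qed
    have "zip_agree (G (length \<pi>)) xs (G (length \<pi> - 1)) (obj_args (snd (last \<pi>)))"
      using snoc.prems(3)[of "length \<pi>"] False \<tau>(2) by (simp add: nth_append last_conv_nth)
    \<comment> \<open>\<open>zip_agree\<close> only constrains a common prefix; equal arities make it the whole tuple.\<close>
    moreover have "length xs = length a"
      using wf_setting_stgd(1)[OF wf \<tau>(1)] \<tau>(2) type_chain_arity[OF wf chain] by simp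
    ultimately have "map (G (length \<pi>)) xs = a"
      by (simp add: a_def map_eq_map_iff_zip_agree)
    moreover have "body_sat I (G (length \<pi>)) (fst \<tau>)"
      using snoc.prems(2)[of "length \<pi>"] by simp
    ultimately show ?thesis
      using type_chain.snoc[OF chain \<tau>] \<tau>(2) by simp
  qed
qed

lemma length_tgd_seq [simp]: "length (tgd_seq \<pi> \<sigma> \<sigma>') = Suc (Suc (length \<pi>))"
  by (simp add: tgd_seq_def)

lemma nth_tgd_seq [simp]:
  "k < length \<pi> \<Longrightarrow> tgd_seq \<pi> \<sigma> \<sigma>' ! k = \<pi> ! k"
  "tgd_seq \<pi> \<sigma> \<sigma>' ! length \<pi> = \<sigma>"
  "tgd_seq \<pi> \<sigma> \<sigma>' ! Suc (length \<pi>) = \<sigma>'"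
  by (simp_all add: tgd_seq_def nth_append)

lemma tgd_vars_in_tagged_vars:
  "k < Suc (Suc (length \<pi>)) \<Longrightarrow> v \<in> tgd_vars (tgd_seq \<pi> \<sigma> \<sigma>' ! k) \<Longrightarrow> (k, v) \<in> tagged_vars \<pi> \<sigma> \<sigma>'"
  by (simp add: tagged_vars_def)

lemma finite_tagged_vars: "finite (tagged_vars \<pi> \<sigma> \<sigma>')"
proof (rule finite_subset)
  show "tagged_vars \<pi> \<sigma> \<sigma>' \<subseteq> (\<Union>k<length (tgd_seq \<pi> \<sigma> \<sigma>'). {k} \<times> tgd_vars (tgd_seq \<pi> \<sigma> \<sigma>' ! k))"
    unfolding tagged_vars_def by blast
qed (simp add: finite_tgd_vars)

lemma mem_identI:
  "0 < i \<Longrightarrow> i < Suc (Suc (length \<pi>)) \<Longrightarrow>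
    (x, y) \<in> set (zip (subj_args (snd (tgd_seq \<pi> \<sigma> \<sigma>' ! i)))
                     (obj_args (snd (tgd_seq \<pi> \<sigma> \<sigma>' ! prev_idx \<pi> i))))
    \<Longrightarrow> ((i, x), (prev_idx \<pi> i, y)) \<in> ident \<pi> \<sigma> \<sigma>'"
  unfolding ident_def by auto

lemma mem_identE:
  assumes "((i, x), (j, y)) \<in> ident \<pi> \<sigma> \<sigma>'"
  obtains "0 < i" "i < Suc (Suc (length \<pi>))" "j = prev_idx \<pi> i"
    "(x, y) \<in> set (zip (subj_args (snd (tgd_seq \<pi> \<sigma> \<sigma>' ! i)))
                      (obj_args (snd (tgd_seq \<pi> \<sigma> \<sigma>' ! prev_idx \<pi> i))))"
  using assms unfolding ident_def by auto

lemma ident_subset_tagged_vars: "ident \<pi> \<sigma> \<sigma>' \<subseteq> tagged_vars \<pi> \<sigma> \<sigma>' \<times> tagged_vars \<pi> \<sigma> \<sigma>'"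
proof clarify
  fix i x j y
  assume "((i, x), (j, y)) \<in> ident \<pi> \<sigma> \<sigma>'"
  then have i: "i < Suc (Suc (length \<pi>))" and j: "j = prev_idx \<pi> i"
    and "(x, y) \<in> set (zip (subj_args (snd (tgd_seq \<pi> \<sigma> \<sigma>' ! i)))
                          (obj_args (snd (tgd_seq \<pi> \<sigma> \<sigma>' ! j))))"
    unfolding ident_def by auto
  then have "x \<in> tgd_vars (tgd_seq \<pi> \<sigma> \<sigma>' ! i)" "y \<in> tgd_vars (tgd_seq \<pi> \<sigma> \<sigma>' ! j)"
    using subj_args_subset_head_vars obj_args_subset_head_vars
    by (fastforce simp: tgd_vars_def dest: set_zip_leftD set_zip_rightD)+
  moreover have "j < Suc (Suc (length \<pi>))"
    using j by (auto simp: prev_idx_def)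
  ultimately show "(i, x) \<in> tagged_vars \<pi> \<sigma> \<sigma>' \<and> (j, y) \<in> tagged_vars \<pi> \<sigma> \<sigma>'"
    using i by (simp_all add: tgd_vars_in_tagged_vars)
qed

lemma ident_respected_iff:
  "(\<forall>((i, x), (j, y))\<in>ident \<pi> \<sigma> \<sigma>'. G i x = G j y) \<longleftrightarrow>
    (\<forall>i. 0 < i \<and> i < Suc (Suc (length \<pi>)) \<longrightarrow>
      zip_agree (G i) (subj_args (snd (tgd_seq \<pi> \<sigma> \<sigma>' ! i)))
        (G (prev_idx \<pi> i)) (obj_args (snd (tgd_seq \<pi> \<sigma> \<sigma>' ! prev_idx \<pi> i))))"
proof (intro iffI allI impI)
  let ?seq = "tgd_seq \<pi> \<sigma> \<sigma>'"
  fix i assume agree: "\<forall>((i, x), (j, y))\<in>ident \<pi> \<sigma> \<sigma>'. G i x = G j y"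
    and i: "0 < i \<and> i < Suc (Suc (length \<pi>))"
  show "zip_agree (G i) (subj_args (snd (?seq ! i)))
      (G (prev_idx \<pi> i)) (obj_args (snd (?seq ! prev_idx \<pi> i)))"
    unfolding zip_agree_def
  proof clarify
    fix x y
    assume "(x, y) \<in> set (zip (subj_args (snd (?seq ! i))) (obj_args (snd (?seq ! prev_idx \<pi> i))))"
    with i have "((i, x), (prev_idx \<pi> i, y)) \<in> ident \<pi> \<sigma> \<sigma>'"
      by (simp add: mem_identI)
    with agree show "G i x = G (prev_idx \<pi> i) y"
      by fastforce
  qed
next
  let ?seq = "tgd_seq \<pi> \<sigma> \<sigma>'"
  assume agree: "\<forall>i. 0 < i \<and> i < Suc (Suc (length \<pi>)) \<longrightarrow> zip_agree (G i) (subj_args (snd (?seq ! i)))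
      (G (prev_idx \<pi> i)) (obj_args (snd (?seq ! prev_idx \<pi> i)))"
  show "\<forall>((i, x), (j, y))\<in>ident \<pi> \<sigma> \<sigma>'. G i x = G j y"
  proof clarify
    fix i x j y assume "((i, x), (j, y)) \<in> ident \<pi> \<sigma> \<sigma>'"
    then obtain i: "0 < i" "i < Suc (Suc (length \<pi>))" and j: "j = prev_idx \<pi> i"
      and xy: "(x, y) \<in> set (zip (subj_args (snd (?seq ! i))) (obj_args (snd (?seq ! prev_idx \<pi> i))))"
      by (rule mem_identE)
    from agree i have "zip_agree (G i) (subj_args (snd (?seq ! i)))
        (G (prev_idx \<pi> i)) (obj_args (snd (?seq ! prev_idx \<pi> i)))"
      by simp
    with xy show "G i x = G j y"
      unfolding zip_agree_def j by blast
  qed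
qed

(* The composition h o h_{pi,sigma,sigma'} of a homomorphism from I_{pi,sigma,sigma'}, viewed as
   one match G k per st-tgd of pi @ [sigma, sigma']. *)
definition compatible_match ::
  "('r \<times> 'l list) set \<Rightarrow> ('r, 't, 'p, 'f, 'v) tgd list \<Rightarrow> ('r, 't, 'p, 'f, 'v) tgd
    \<Rightarrow> ('r, 't, 'p, 'f, 'v) tgd \<Rightarrow> (nat \<Rightarrow> 'v \<Rightarrow> 'l) \<Rightarrow> bool" where
  "compatible_match I \<pi> \<sigma> \<sigma>' G \<longleftrightarrow>
     (\<forall>k<length (tgd_seq \<pi> \<sigma> \<sigma>'). body_sat I (G k) (fst (tgd_seq \<pi> \<sigma> \<sigma>' ! k)))
   \<and> (\<forall>((i, x), (j, y))\<in>ident \<pi> \<sigma> \<sigma>'. G i x = G j y)"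

lemma compatible_match_iff:
  assumes "\<pi> \<noteq> []"
  shows "compatible_match I \<pi> \<sigma> \<sigma>' G \<longleftrightarrow>
     (\<forall>k<length \<pi>. body_sat I (G k) (fst (\<pi> ! k)))
   \<and> body_sat I (G (length \<pi>)) (fst \<sigma>) \<and> body_sat I (G (Suc (length \<pi>))) (fst \<sigma>')
   \<and> (\<forall>i. 0 < i \<and> i < length \<pi> \<longrightarrow>
        zip_agree (G i) (subj_args (snd (\<pi> ! i))) (G (i - 1)) (obj_args (snd (\<pi> ! (i - 1)))))
   \<and> zip_agree (G (length \<pi>)) (subj_args (snd \<sigma>)) (G (length \<pi> - 1)) (obj_args (snd (last \<pi>)))
   \<and> zip_agree (G (Suc (length \<pi>))) (subj_args (snd \<sigma>')) (G (length \<pi> - 1)) (obj_args (snd (last \<pi>)))"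
proof -
  let ?seq = "tgd_seq \<pi> \<sigma> \<sigma>'"
  define n where "n = length \<pi>"
  have prev: "prev_idx \<pi> i = (if i < n then i - 1 else n - 1)" for i
    by (simp add: prev_idx_def n_def)
  have last: "?seq ! (n - 1) = last \<pi>"
    using assms by (simp add: n_def last_conv_nth)
  have "(\<forall>((i, x), (j, y))\<in>ident \<pi> \<sigma> \<sigma>'. G i x = G j y) \<longleftrightarrow>
      (\<forall>i. 0 < i \<and> i < Suc (Suc n) \<longrightarrow> zip_agree (G i) (subj_args (snd (?seq ! i)))
          (G (prev_idx \<pi> i)) (obj_args (snd (?seq ! prev_idx \<pi> i))))"
    unfolding ident_respected_iff n_def ..
  also have "\<dots> \<longleftrightarrow> (\<forall>i. 0 < i \<and> i < n \<longrightarrow>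
        zip_agree (G i) (subj_args (snd (\<pi> ! i))) (G (i - 1)) (obj_args (snd (\<pi> ! (i - 1)))))
      \<and> zip_agree (G n) (subj_args (snd \<sigma>)) (G (n - 1)) (obj_args (snd (last \<pi>)))
      \<and> zip_agree (G (Suc n)) (subj_args (snd \<sigma>')) (G (n - 1)) (obj_args (snd (last \<pi>)))"
  proof -
    have split: "(\<forall>i. 0 < i \<and> i < Suc (Suc n) \<longrightarrow> P i) \<longleftrightarrow>
        (\<forall>i. 0 < i \<and> i < n \<longrightarrow> P i) \<and> P n \<and> P (Suc n)" for P
      using assms by (auto simp: n_def less_Suc_eq)
    show ?thesis
      unfolding split using last by (simp add: prev n_def less_imp_diff_less cong: conj_cong)
  qed
  moreover have "(\<forall>k<length ?seq. body_sat I (G k) (fst (?seq ! k))) \<longleftrightarrow>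
      (\<forall>k<n. body_sat I (G k) (fst (\<pi> ! k)))
      \<and> body_sat I (G n) (fst \<sigma>) \<and> body_sat I (G (Suc n)) (fst \<sigma>')"
    by (auto simp: less_Suc_eq n_def)
  ultimately show ?thesis
    unfolding compatible_match_def by (simp only: n_def conj_assoc)
qed

lemma compatible_match_copy_assign:
  assumes hp: "is_h_pi nullL \<pi> \<sigma> \<sigma>' hp" and hom: "is_hom nullL h (I_pi \<pi> \<sigma> \<sigma>' hp) I"
  shows "compatible_match I \<pi> \<sigma> \<sigma>' (copy_assign h hp)"
  unfolding compatible_match_def
proof (intro conjI allI impI)
  fix k assume k: "k < length (tgd_seq \<pi> \<sigma> \<sigma>')"
  show "body_sat I (copy_assign h hp k) (fst (tgd_seq \<pi> \<sigma> \<sigma>' ! k))"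
    unfolding body_sat_def
  proof clarify
    fix R xs assume "(R, xs) \<in> set (fst (tgd_seq \<pi> \<sigma> \<sigma>' ! k))"
    with k have "(R, map hp (map (Pair k) xs)) \<in> I_pi \<pi> \<sigma> \<sigma>' hp"
      unfolding I_pi_def tagged_body_def by force
    with hom have "(R, map h (map hp (map (Pair k) xs))) \<in> I"
      unfolding is_hom_def by blast
    then show "(R, map (copy_assign h hp k) xs) \<in> I"
      by (simp add: copy_assign_def comp_def)
  qed
next
  show "\<forall>((i, x), (j, y))\<in>ident \<pi> \<sigma> \<sigma>'. copy_assign h hp i x = copy_assign h hp j y"
  proof clarify
    fix i x j y assume e: "((i, x), (j, y)) \<in> ident \<pi> \<sigma> \<sigma>'"
    then have "(i, x) \<in> tagged_vars \<pi> \<sigma> \<sigma>'" "(j, y) \<in> tagged_vars \<pi> \<sigma> \<sigma>'"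
      using ident_subset_tagged_vars by blast+
    moreover have "((i, x), (j, y)) \<in> (ident \<pi> \<sigma> \<sigma>' \<union> (ident \<pi> \<sigma> \<sigma>')\<inverse>)\<^sup>*"
      using e by blast
    ultimately have "hp (i, x) = hp (j, y)"
      using hp unfolding is_h_pi_def by blast
    then show "copy_assign h hp i x = copy_assign h hp j y"
      by (simp add: copy_assign_def)
  qed
qed

lemma finite_inj_into_infinite:
  assumes "finite A" "infinite B"
  obtains f where "inj_on f A" "f ` A \<subseteq> B"
proof -
  obtain B' where "finite B'" "card B' = card A" "B' \<subseteq> B"
    using infinite_arbitrarily_large[OF assms(2)] by blast
  with card_le_inj[OF assms(1), of B'] that show thesis
    by auto
qed

lemma obtain_labelling_with_kernel:
  fixes R :: "('a \<times> 'a) set" and N :: "'b set"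
  assumes "finite V" "infinite N"
  obtains c :: "'a \<Rightarrow> 'b" where "c ` V \<subseteq> N"
    "\<And>u w. u \<in> V \<Longrightarrow> w \<in> V \<Longrightarrow> c u = c w \<longleftrightarrow> (u, w) \<in> (R \<union> R\<inverse>)\<^sup>*"
proof -
  let ?S = "(R \<union> R\<inverse>)\<^sup>*"
  have equiv: "equiv UNIV ?S"
    by (simp add: equiv_def refl_rtrancl sym_rtrancl[OF sym_Un_converse] trans_rtrancl)
  obtain e :: "'a set \<Rightarrow> 'b" where e: "inj_on e ((\<lambda>u. ?S `` {u}) ` V)" "e ` (\<lambda>u. ?S `` {u}) ` V \<subseteq> N"
    using finite_inj_into_infinite[OF finite_imageI[OF assms(1)] assms(2)] by blast
  show thesis
  proof (rule that[of "\<lambda>u. e (?S `` {u})"])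
    show "(\<lambda>u. e (?S `` {u})) ` V \<subseteq> N"
      using e(2) by auto
    fix u w assume "u \<in> V" "w \<in> V"
    then have "e (?S `` {u}) = e (?S `` {w}) \<longleftrightarrow> ?S `` {u} = ?S `` {w}"
      using e(1) by (simp add: inj_on_eq_iff)
    also have "\<dots> \<longleftrightarrow> (u, w) \<in> ?S"
      using eq_equiv_class_iff[OF equiv] by simp
    finally show "e (?S `` {u}) = e (?S `` {w}) \<longleftrightarrow> (u, w) \<in> ?S" .
  qed
qed

lemma obtain_factorization:
  assumes "c ` V \<subseteq> N" "\<And>u w. u \<in> V \<Longrightarrow> w \<in> V \<Longrightarrow> c u = c w \<Longrightarrow> G u = G w"
  obtains h where "\<And>x. x \<notin> N \<Longrightarrow> h x = x" "\<And>u. u \<in> V \<Longrightarrow> h (c u) = G u"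
proof
  define h where "h x = (if x \<in> c ` V then G (inv_into V c x) else x)" for x
  show "h x = x" if "x \<notin> N" for x
    using that assms(1) unfolding h_def by auto
  show "h (c u) = G u" if "u \<in> V" for u
    using that assms(2)[of "inv_into V c (c u)" u] unfolding h_def
    by (simp add: inv_into_into f_inv_into_f)
qed

lemma eq_if_rtrancl_symcl:
  assumes "\<And>u w. (u, w) \<in> R \<Longrightarrow> G u = G w" and "(u, w) \<in> (R \<union> R\<inverse>)\<^sup>*"
  shows "G u = G w"
  using assms(2) by (induction rule: rtrancl_induct) (auto dest: assms(1))

lemma obtain_h_pi_hom:
  fixes G :: "nat \<Rightarrow> 'v \<Rightarrow> 'l" and \<pi> :: "('r, 't, 'p, 'f, 'v) tgd list"
  assumes inf: "infinite nullL" and m: "compatible_match I \<pi> \<sigma> \<sigma>' G"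
  obtains hp h where "is_h_pi nullL \<pi> \<sigma> \<sigma>' hp" "is_hom nullL h (I_pi \<pi> \<sigma> \<sigma>' hp) I"
    "\<And>k v. (k, v) \<in> tagged_vars \<pi> \<sigma> \<sigma>' \<Longrightarrow> copy_assign h hp k v = G k v"
proof -
  let ?V = "tagged_vars \<pi> \<sigma> \<sigma>'" and ?R = "ident \<pi> \<sigma> \<sigma>'"
  obtain hp :: "nat \<times> 'v \<Rightarrow> 'l" where hp_null: "hp ` ?V \<subseteq> nullL"
    and hp_eq: "\<And>u w. u \<in> ?V \<Longrightarrow> w \<in> ?V \<Longrightarrow> hp u = hp w \<longleftrightarrow> (u, w) \<in> (?R \<union> ?R\<inverse>)\<^sup>*"
    using obtain_labelling_with_kernel[OF finite_tagged_vars inf, where R = "?R"] by blast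
  have agree: "\<forall>((i, x), (j, y))\<in>?R. G i x = G j y"
    using m unfolding compatible_match_def by (rule conjunct2)
  have "case_prod G u = case_prod G w" if "(u, w) \<in> ?R" for u w
    using bspec[OF agree that] by (simp add: split_beta)
  then have G_eq: "case_prod G u = case_prod G w" if "(u, w) \<in> (?R \<union> ?R\<inverse>)\<^sup>*" for u w
    using that by (rule eq_if_rtrancl_symcl)
  obtain h where h_id: "\<And>x. x \<notin> nullL \<Longrightarrow> h x = x"
    and h_hp: "\<And>u. u \<in> ?V \<Longrightarrow> h (hp u) = case_prod G u"
    using obtain_factorization[OF hp_null, of "case_prod G"] hp_eq G_eq by blast
  have "is_hom nullL h (I_pi \<pi> \<sigma> \<sigma>' hp) I"
    unfolding is_hom_def
  proof (intro conjI allI impI ballI)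
    fix F assume "F \<in> I_pi \<pi> \<sigma> \<sigma>' hp"
    then obtain k R xs where F: "F = (R, map hp (map (Pair k) xs))"
      and k: "k < length (tgd_seq \<pi> \<sigma> \<sigma>')" and R: "(R, xs) \<in> set (fst (tgd_seq \<pi> \<sigma> \<sigma>' ! k))"
      unfolding I_pi_def tagged_body_def by auto
    have "(k, v) \<in> ?V" if "v \<in> set xs" for v
      using k R that unfolding tagged_vars_def tgd_vars_def body_vars_def by blast
    then have "map h (map hp (map (Pair k) xs)) = map (G k) xs"
      using h_hp by simp
    moreover have "(R, map (G k) xs) \<in> I"
      using m k R unfolding compatible_match_def body_sat_def by blast
    ultimately show "case F of (R, us) \<Rightarrow> (R, map h us) \<in> I"
      unfolding F prod.case by (simp only:)
  qed (rule h_id)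
  moreover have "is_h_pi nullL \<pi> \<sigma> \<sigma>' hp"
    unfolding is_h_pi_def using hp_null hp_eq by blast
  ultimately show thesis
    using that h_hp by (simp add: copy_assign_def)
qed

lemma body_sat_not_null:
  assumes "\<forall>(R, us)\<in>I. \<forall>x\<in>set us. x \<notin> nullL" "body_sat I g B" "x \<in> body_vars B"
  shows "g x \<notin> nullL"
  using body_sat_adom[OF assms(2,3)] assms(1) unfolding adom_def by blast

lemma is_const_eval_obj_term:
  assumes wf: "wf_setting E nullI" and no_nulls: "\<forall>(R, us)\<in>I. \<forall>x\<in>set us. x \<notin> nullL"
    and \<sigma>: "\<sigma> \<in> stgds E" and g: "body_sat I g (fst \<sigma>)"
  shows "is_const nullI nullL (eval_term (cons_int E) g (obj_term (snd \<sigma>)))"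
proof (cases "obj_term (snd \<sigma>)")
  case (Var x)
  then have "x \<in> body_vars (fst \<sigma>)"
    using wf_setting_stgd(2)[OF wf \<sigma>] term_vars_obj_term_subset[of "snd \<sigma>"] by auto
  with Var show ?thesis
    using body_sat_not_null[OF no_nulls g] by simp
next
  case (Fn f' us)
  moreover have "wf_term E (obj_term (snd \<sigma>))"
    using wf_setting_stgd(1)[OF wf \<sigma>] by (cases "snd \<sigma>") auto
  ultimately show ?thesis
    using wf unfolding wf_setting_def by simp
qed

lemma cond_b_of_compatible_match:
  assumes wf: "wf_setting E nullI" and no_nulls: "\<forall>(R, us)\<in>I. \<forall>x\<in>set us. x \<notin> nullL"
    and acc: "accessible_with E \<pi> T f" and cont: "contentious E \<sigma> \<sigma>' T f p"
    and m: "compatible_match I \<pi> \<sigma> \<sigma>' G"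
  shows "cond_b E nullI nullL I T f p (map (G (length \<pi>)) (subj_args (snd \<sigma>)))
      (eval_term (cons_int E) (G (length \<pi>)) (obj_term (snd \<sigma>)))
      (eval_term (cons_int E) (G (Suc (length \<pi>))) (obj_term (snd \<sigma>')))
    \<and> map (G (length \<pi>)) (subj_args (snd \<sigma>)) = map (G (Suc (length \<pi>))) (subj_args (snd \<sigma>'))"
proof -
  define n where "n = length \<pi>"
  have "\<pi> \<noteq> []"
    using acc by (simp add: accessible_with_def)
  note m = m[unfolded compatible_match_iff[OF this], folded n_def]
  obtain z t z' t' where \<sigma>: "snd \<sigma> = HTriple (Fn f z) p t" "snd \<sigma>' = HTriple (Fn f z') p t'"
    and st: "\<sigma> \<in> stgds E" "\<sigma>' \<in> stgds E"
    using cont unfolding contentious_def by blast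
  define a where "a = map (G (n - 1)) (obj_args (snd (last \<pi>)))"
  have chain: "type_chain E I G \<pi> T f a"
    unfolding a_def n_def using type_chain_if_accessible_with[OF wf acc] m by (simp add: n_def)
  have "length z = length a" "length z' = length a"
    using wf_setting_stgd(1)[OF wf] st \<sigma> type_chain_arity[OF wf chain] by fastforce+
  then have za: "map (G n) z = a" "map (G (Suc n)) z' = a"
    using m \<sigma> by (simp_all add: a_def map_eq_map_iff_zip_agree)
  have "x \<in> body_vars (fst \<sigma>)" if "x \<in> set z" for x
    using wf_setting_stgd(2)[OF wf st(1)] \<sigma>(1) that by auto
  moreover have bs: "body_sat I (G n) (fst \<sigma>)" and bs': "body_sat I (G (Suc n)) (fst \<sigma>')"
    using m by blast+
  ultimately have "set a \<subseteq> adom I" "\<forall>x\<in>set a. x \<notin> nullL"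
    using za(1) body_sat_adom[OF bs] body_sat_not_null[OF no_nulls bs] by auto
  moreover have "TypeF T (Iri (cons_int E f a)) \<in> core_pre E I"
    using type_chain_core_pre[OF chain] .
  moreover have "eval_head (cons_int E) (G n) (snd \<sigma>) \<in> core_pre E I"
    "eval_head (cons_int E) (G (Suc n)) (snd \<sigma>') \<in> core_pre E I"
    using core_pre.base[OF st(1) bs] core_pre.base[OF st(2) bs'] .
  moreover have "is_const nullI nullL (eval_term (cons_int E) (G n) (obj_term (snd \<sigma>)))"
    "is_const nullI nullL (eval_term (cons_int E) (G (Suc n)) (obj_term (snd \<sigma>')))"
    using is_const_eval_obj_term[OF wf no_nulls st(1) bs]
      is_const_eval_obj_term[OF wf no_nulls st(2) bs'] .
  ultimately show ?thesis
    unfolding cond_b_def n_def[symmetric] using type_chain_arity[OF wf chain] \<sigma> za by simp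
qed

lemma compatible_match_type_chain_extend:
  assumes chain: "type_chain E I G \<pi> T f a"
    and \<sigma>: "body_sat I (G (length \<pi>)) (fst \<sigma>)" "map (G (length \<pi>)) (subj_args (snd \<sigma>)) = a"
    and \<sigma>': "body_sat I (G (Suc (length \<pi>))) (fst \<sigma>')"
      "map (G (Suc (length \<pi>))) (subj_args (snd \<sigma>')) = a"
  shows "compatible_match I \<pi> \<sigma> \<sigma>' G"
proof -
  have "\<forall>i. 0 < i \<and> i < length \<pi> \<longrightarrow>
      zip_agree (G i) (subj_args (snd (\<pi> ! i))) (G (i - 1)) (obj_args (snd (\<pi> ! (i - 1))))"
    using type_chain_link[OF chain] by (simp add: map_eq_map_iff_zip_agree)
  moreover have "map (G (length \<pi>)) (subj_args (snd \<sigma>)) = map (G (length \<pi> - 1)) (obj_args (snd (last \<pi>)))"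
    "map (G (Suc (length \<pi>))) (subj_args (snd \<sigma>')) = map (G (length \<pi> - 1)) (obj_args (snd (last \<pi>)))"
    using type_chain_last_obj_args[OF chain] \<sigma>(2) \<sigma>'(2) by simp_all
  then have "zip_agree (G (length \<pi>)) (subj_args (snd \<sigma>)) (G (length \<pi> - 1)) (obj_args (snd (last \<pi>)))"
    "zip_agree (G (Suc (length \<pi>))) (subj_args (snd \<sigma>')) (G (length \<pi> - 1)) (obj_args (snd (last \<pi>)))"
    unfolding map_eq_map_iff_zip_agree by simp_all
  ultimately show ?thesis
    unfolding compatible_match_iff[OF type_chain_nonempty[OF chain]]
    using type_chain_body_sat[OF chain] \<sigma>(1) \<sigma>'(1) by simp
qed

lemma compatible_match_of_cond_b:
  assumes wf: "wf_setting E nullI" and con: "constructive E" and vs: "violation_sort E T p"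
    and cb: "cond_b E nullI nullL I T f p a b b'"
  obtains \<pi> \<sigma> \<sigma>' G where "accessible_with E \<pi> T f" "contentious E \<sigma> \<sigma>' T f p"
    "compatible_match I \<pi> \<sigma> \<sigma>' G"
    "a = map (G (length \<pi>)) (subj_args (snd \<sigma>))" "a = map (G (Suc (length \<pi>))) (subj_args (snd \<sigma>'))"
    "b = eval_term (cons_int E) (G (length \<pi>)) (obj_term (snd \<sigma>))"
    "b' = eval_term (cons_int E) (G (Suc (length \<pi>))) (obj_term (snd \<sigma>'))"
proof -
  have la: "length a = cons_arity E f"
    and facts: "TypeF T (Iri (cons_int E f a)) \<in> core_pre E I"
      "Triple (Iri (cons_int E f a)) p b \<in> core_pre E I"
      "Triple (Iri (cons_int E f a)) p b' \<in> core_pre E I"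
    using cb unfolding cond_b_def by auto
  obtain \<pi> G where chain: "type_chain E I G \<pi> T f a"
    using core_pre_type_chain[OF wf con facts(1) refl la] by blast
  obtain \<sigma> g z t where \<sigma>: "\<sigma> \<in> stgds E" "body_sat I g (fst \<sigma>)" "snd \<sigma> = HTriple (Fn f z) p t"
    "map g z = a" "eval_term (cons_int E) g t = b"
    using core_pre_Triple_cons_intE[OF wf con facts(2) la] .
  obtain \<sigma>' g' z' t' where \<sigma>': "\<sigma>' \<in> stgds E" "body_sat I g' (fst \<sigma>')" "snd \<sigma>' = HTriple (Fn f z') p t'"
    "map g' z' = a" "eval_term (cons_int E) g' t' = b'"
    using core_pre_Triple_cons_intE[OF wf con facts(3) la] .
  define G' where "G' = G(length \<pi> := g, Suc (length \<pi>) := g')"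
  have "type_chain E I G' \<pi> T f a"
    using chain by (rule type_chain_cong) (simp add: G'_def)
  then have "compatible_match I \<pi> \<sigma> \<sigma>' G'"
    by (rule compatible_match_type_chain_extend) (use \<sigma> \<sigma>' in \<open>simp_all add: G'_def\<close>)
  moreover have acc: "accessible_with E \<pi> T f"
    using type_chain_accessible_with[OF chain] .
  moreover have "contentious E \<sigma> \<sigma>' T f p"
    using \<sigma>(1,3) \<sigma>'(1,3) acc vs by (auto simp: contentious_def accessible_def)
  ultimately show thesis
    using that \<sigma> \<sigma>' by (simp add: G'_def)
qed

lemma cond_b_if_cond_a:
  assumes wf: "wf_setting E nullI" and no_nulls: "\<forall>(R, us)\<in>I. \<forall>x\<in>set us. x \<notin> nullL"
    and "cond_a E nullL I T f p \<pi> \<sigma> \<sigma>' hp h"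
  shows "cond_b E nullI nullL I T f p
      (map (copy_assign h hp (length \<pi>)) (subj_args (snd \<sigma>)))
      (eval_term (cons_int E) (copy_assign h hp (length \<pi>)) (obj_term (snd \<sigma>)))
      (eval_term (cons_int E) (copy_assign h hp (Suc (length \<pi>))) (obj_term (snd \<sigma>')))
    \<and> map (copy_assign h hp (length \<pi>)) (subj_args (snd \<sigma>))
      = map (copy_assign h hp (Suc (length \<pi>))) (subj_args (snd \<sigma>'))"
proof -
  have acc: "accessible_with E \<pi> T f" and cont: "contentious E \<sigma> \<sigma>' T f p"
    and "compatible_match I \<pi> \<sigma> \<sigma>' (copy_assign h hp)"
    using assms(3) compatible_match_copy_assign unfolding cond_a_def by blast+
  then show ?thesis
    by (rule cond_b_of_compatible_match[OF wf no_nulls])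
qed

lemma cond_a_if_cond_b:
  assumes wf: "wf_setting E nullI" and con: "constructive E" and inf: "infinite nullL"
    and vs: "violation_sort E T p" and cb: "cond_b E nullI nullL I T f p a b b'"
  shows "\<exists>\<pi> \<sigma> \<sigma>' hp h. cond_a E nullL I T f p \<pi> \<sigma> \<sigma>' hp h
    \<and> a = map (copy_assign h hp (length \<pi>)) (subj_args (snd \<sigma>))
    \<and> a = map (copy_assign h hp (Suc (length \<pi>))) (subj_args (snd \<sigma>'))
    \<and> b = eval_term (cons_int E) (copy_assign h hp (length \<pi>)) (obj_term (snd \<sigma>))
    \<and> b' = eval_term (cons_int E) (copy_assign h hp (Suc (length \<pi>))) (obj_term (snd \<sigma>'))"
proof -
  obtain \<pi> \<sigma> \<sigma>' G where acc: "accessible_with E \<pi> T f" and cont: "contentious E \<sigma> \<sigma>' T f p"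
    and m: "compatible_match I \<pi> \<sigma> \<sigma>' G"
    and eqs: "a = map (G (length \<pi>)) (subj_args (snd \<sigma>))"
      "a = map (G (Suc (length \<pi>))) (subj_args (snd \<sigma>'))"
      "b = eval_term (cons_int E) (G (length \<pi>)) (obj_term (snd \<sigma>))"
      "b' = eval_term (cons_int E) (G (Suc (length \<pi>))) (obj_term (snd \<sigma>'))"
    by (rule compatible_match_of_cond_b[OF wf con vs cb])
  obtain hp h where hp: "is_h_pi nullL \<pi> \<sigma> \<sigma>' hp" and hom: "is_hom nullL h (I_pi \<pi> \<sigma> \<sigma>' hp) I"
    and agree: "\<And>k v. (k, v) \<in> tagged_vars \<pi> \<sigma> \<sigma>' \<Longrightarrow> copy_assign h hp k v = G k v"
    using obtain_h_pi_hom[OF inf m] by blast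
  have agree_\<sigma>: "copy_assign h hp (length \<pi>) v = G (length \<pi>) v" if "v \<in> head_vars (snd \<sigma>)" for v
    using agree tgd_vars_in_tagged_vars[of "length \<pi>" \<pi> v \<sigma> \<sigma>'] that by (simp add: tgd_vars_def)
  have agree_\<sigma>': "copy_assign h hp (Suc (length \<pi>)) v = G (Suc (length \<pi>)) v"
    if "v \<in> head_vars (snd \<sigma>')" for v
    using agree tgd_vars_in_tagged_vars[of "Suc (length \<pi>)" \<pi> v \<sigma> \<sigma>'] that by (simp add: tgd_vars_def)
  have "a = map (copy_assign h hp (length \<pi>)) (subj_args (snd \<sigma>))"
    "b = eval_term (cons_int E) (copy_assign h hp (length \<pi>)) (obj_term (snd \<sigma>))"
    using eqs(1,3) agree_\<sigma> subj_args_subset_head_vars[of "snd \<sigma>"] term_vars_obj_term_subset[of "snd \<sigma>"]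
    by (auto intro!: eval_term_cong)
  moreover have "a = map (copy_assign h hp (Suc (length \<pi>))) (subj_args (snd \<sigma>'))"
    "b' = eval_term (cons_int E) (copy_assign h hp (Suc (length \<pi>))) (obj_term (snd \<sigma>'))"
    using eqs(2,4) agree_\<sigma>' subj_args_subset_head_vars[of "snd \<sigma>'"] term_vars_obj_term_subset[of "snd \<sigma>'"]
    by (auto intro!: eval_term_cong)
  moreover have "cond_a E nullL I T f p \<pi> \<sigma> \<sigma>' hp h"
    unfolding cond_a_def using acc cont hp hom by blast
  ultimately show ?thesis
    by blast
qed

theorem proposition1:
  fixes E :: "('r,'t,'p,'f,'i,'l,'v) setting"
    and nullI :: "'i set" and nullL :: "'l set"
    and I :: "('r \<times> 'l list) set"
    and T :: 't and f :: 'f and p :: 'p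
  assumes "wf_setting E nullI"
    and "constructive E"
    and "infinite nullL"
    and "violation_sort E T p"
    and "rel_instance E I"
    and "\<forall>(R, us)\<in>I. \<forall>x\<in>set us. x \<notin> nullL"
  shows "((\<exists>\<pi> \<sigma> \<sigma>' hp h. cond_a E nullL I T f p \<pi> \<sigma> \<sigma>' hp h)
            \<longleftrightarrow> (\<exists>a b b'. cond_b E nullI nullL I T f p a b b'))
       \<and> (\<forall>\<pi> \<sigma> \<sigma>' hp h. cond_a E nullL I T f p \<pi> \<sigma> \<sigma>' hp h \<longrightarrow>
            cond_b E nullI nullL I T f p
              (map (copy_assign h hp (length \<pi>)) (subj_args (snd \<sigma>)))
              (eval_term (cons_int E) (copy_assign h hp (length \<pi>)) (obj_term (snd \<sigma>)))
              (eval_term (cons_int E) (copy_assign h hp (Suc (length \<pi>))) (obj_term (snd \<sigma>')))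
          \<and> map (copy_assign h hp (length \<pi>)) (subj_args (snd \<sigma>))
              = map (copy_assign h hp (Suc (length \<pi>))) (subj_args (snd \<sigma>')))
       \<and> (\<forall>a b b'. cond_b E nullI nullL I T f p a b b' \<longrightarrow>
            (\<exists>\<pi> \<sigma> \<sigma>' hp h. cond_a E nullL I T f p \<pi> \<sigma> \<sigma>' hp h
               \<and> a = map (copy_assign h hp (length \<pi>)) (subj_args (snd \<sigma>))
               \<and> a = map (copy_assign h hp (Suc (length \<pi>))) (subj_args (snd \<sigma>'))
               \<and> b = eval_term (cons_int E) (copy_assign h hp (length \<pi>)) (obj_term (snd \<sigma>))
               \<and> b' = eval_term (cons_int E) (copy_assign h hp (Suc (length \<pi>))) (obj_term (snd \<sigma>'))))"
proof (intro conjI allI impI)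
qed (use cond_b_if_cond_a[OF assms(1,6)] cond_a_if_cond_b[OF assms(1-4)] in meson)+

end
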